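(* Let $G\ne\{0\}$ be a locally balanced Hausdorff topological vector group over $\mathbb R$ and $d$ a metric on $G$ which is continuous as a map $G\times G\to\mathbb R$. If $G$ is not NSS, then there exists a sequence $(g_n)_{n\in\mathbb N}$ in $G$ such that $$0<\sup_{t\in\mathbb R}d(0,tg_1)<1,\qquad \sup_{t\in\mathbb R}d(0,tg_{n+1})<\tfrac14\sup_{t\in\mathbb R}d(0,tg_n)\quad(n=1,2,\dots).$$
   Context: A topological vector group over $\mathbb R$ is a topological abelian group $(G,+)$ which is also a real vector space (same addition) such that $x\mapsto tx$ is continuous for each $t\in\mathbb R$. A subset $A$ is balanced if $tA\subset A$ for all $|t|\le 1$. $G$ is locally balanced if the balanced neighborhoods of $0$ form a neighborhood base of $0$. $G$ is NSS if some neighborhood of $0$ contains no nontrivial subgroup. *)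

theory Defs
  imports "HOL-Analysis.Analysis"
begin

definition nhd0 :: "'a::{topological_space,zero} set \<Rightarrow> bool" where
  "nhd0 U \<longleftrightarrow> (\<exists>V. open V \<and> 0 \<in> V \<and> V \<subseteq> U)"

definition balanced_set :: "'a::real_vector set \<Rightarrow> bool" where
  "balanced_set A \<longleftrightarrow> (\<forall>t::real. \<bar>t\<bar> \<le> 1 \<longrightarrow> (\<lambda>x. t *\<^sub>R x) ` A \<subseteq> A)"

definition locally_balanced :: "'a::{real_vector,topological_space} itself \<Rightarrow> bool" where
  "locally_balanced _ \<longleftrightarrow>
     (\<forall>U::'a set. nhd0 U \<longrightarrow> (\<exists>V. nhd0 V \<and> balanced_set V \<and> V \<subseteq> U))"

definition add_subgroup :: "'a::ab_group_add set \<Rightarrow> bool" where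
  "add_subgroup H \<longleftrightarrow> 0 \<in> H \<and> (\<forall>x\<in>H. \<forall>y\<in>H. x + y \<in> H \<and> - x \<in> H)"

definition NSS :: "'a::{ab_group_add,topological_space} itself \<Rightarrow> bool" where
  "NSS _ \<longleftrightarrow> (\<exists>U::'a set. nhd0 U \<and> (\<forall>H. add_subgroup H \<and> H \<subseteq> U \<longrightarrow> H = {0}))"

definition is_metric :: "('a \<Rightarrow> 'a \<Rightarrow> real) \<Rightarrow> bool" where
  "is_metric d \<longleftrightarrow> (\<forall>x y. d x y = 0 \<longleftrightarrow> x = y) \<and> (\<forall>x y. d x y = d y x) \<and>
     (\<forall>x y z. d x z \<le> d x y + d y z)"

end

theory Submission
  imports Defs
begin

(*
  If G is not NSS, then every neighbourhood U of 0 contains a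
  nontrivial subgroup; if U is moreover balanced, then the whole line R h
  through any nonzero element h of that subgroup lies in U (the integer
  multiples n h lie in U, and balancedness scales them down to every t h).
  Applying this to the open balls {x. d 0 x < e}, which are neighbourhoods of 0
  because d is continuous, gives for every e > 0 a nonzero h whose line radius
  sup_t d(0, t h) lies in (0, e].  A sequence whose radii decrease faster than
  by the factor 1/4 is then chosen recursively, always with target radius one
  eighth of the previous one.
*)

lemma is_metric_self_zero:
  assumes "is_metric d" shows "d x x = 0"
  using assms unfolding is_metric_def by simp

lemma is_metric_pos:
  assumes "is_metric d" and "x \<noteq> y" shows "0 < d x y"
proof -
  have "d x x \<le> d x y + d y x" and "d y x = d x y" and "d x x = 0" and "d x y \<noteq> 0"
    using assms unfolding is_metric_def by blast+
  then show ?thesis by linarith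
qed

lemma nhd0_metric_ball:
  fixes d :: "'a::{topological_space,zero} \<Rightarrow> 'a \<Rightarrow> real"
  assumes metric: "is_metric d"
    and d_cont: "continuous_on UNIV (\<lambda>p::'a \<times> 'a. d (fst p) (snd p))"
    and e: "0 < e"
  shows "nhd0 {x. d 0 x < e}"
proof -
  have "continuous_on UNIV (\<lambda>x::'a. d 0 x)"
    using continuous_on_compose2[OF d_cont continuous_on_Pair[OF continuous_on_const continuous_on_id]]
    by simp
  then have "open {x. d 0 x < e}"
    by (simp add: open_Collect_less continuous_on_const)
  moreover have "0 \<in> {x. d 0 x < e}"
    using is_metric_self_zero[OF metric] e by simp
  ultimately show ?thesis
    unfolding nhd0_def by blast
qed

lemma add_subgroup_of_nat_scaleR:
  fixes H :: "'a::real_vector set"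
  assumes H: "add_subgroup H" and h: "h \<in> H"
  shows "real n *\<^sub>R h \<in> H"
proof (induction n)
  case 0
  then show ?case using H unfolding add_subgroup_def by simp
next
  case (Suc n)
  have "real (Suc n) *\<^sub>R h = real n *\<^sub>R h + h"
    by (simp add: scaleR_left_distrib)
  then show ?case using Suc H h unfolding add_subgroup_def by simp
qed

text \<open>A balanced set containing an additive subgroup contains the whole real
  line through each element of that subgroup: t h is a contraction of some
  natural multiple of h.\<close>
lemma balanced_subgroup_line:
  fixes V :: "'a::real_vector set"
  assumes V: "balanced_set V" and H: "add_subgroup H" "H \<subseteq> V" and h: "h \<in> H"
  shows "t *\<^sub>R h \<in> V"
proof -
  obtain n :: nat where n: "\<bar>t\<bar> + 1 \<le> real n"
    using real_arch_simple by blast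
  then have n_pos: "0 < real n" by linarith
  have "\<bar>t / real n\<bar> \<le> 1"
    using n n_pos by (simp add: abs_divide)
  moreover have "real n *\<^sub>R h \<in> V"
    using add_subgroup_of_nat_scaleR[OF H(1) h] H(2) by blast
  ultimately have "(t / real n) *\<^sub>R (real n *\<^sub>R h) \<in> V"
    using V unfolding balanced_set_def by blast
  then show ?thesis using n_pos by simp
qed

lemma small_line_exists:
  assumes lb: "locally_balanced TYPE('a::{real_vector,topological_space})"
    and notNSS: "\<not> NSS TYPE('a)"
    and U: "nhd0 (U :: 'a set)"
  shows "\<exists>h. h \<noteq> 0 \<and> (\<forall>t::real. t *\<^sub>R h \<in> U)"
proof -
  obtain V :: "'a set" where V: "nhd0 V" "balanced_set V" "V \<subseteq> U"
    using lb U unfolding locally_balanced_def by blast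
  then obtain H where H: "add_subgroup H" "H \<subseteq> V" "H \<noteq> {0}"
    using notNSS unfolding NSS_def by blast
  moreover have "0 \<in> H"
    using H(1) unfolding add_subgroup_def by simp
  ultimately obtain h where "h \<in> H" "h \<noteq> 0" by blast
  then show ?thesis
    using balanced_subgroup_line[OF V(2) H(1,2)] V(3) by blast
qed

definition line_radius :: "('a::real_vector \<Rightarrow> 'a \<Rightarrow> real) \<Rightarrow> 'a \<Rightarrow> real" where
  "line_radius d h = (SUP t::real. d 0 (t *\<^sub>R h))"

lemma line_radius_bounds:
  fixes d :: "'a::real_vector \<Rightarrow> 'a \<Rightarrow> real"
  assumes metric: "is_metric d" and h: "h \<noteq> 0" and small: "\<And>t. d 0 (t *\<^sub>R h) < e"
  shows "bdd_above (range (\<lambda>t::real. d 0 (t *\<^sub>R h)))"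
    and "0 < line_radius d h" and "line_radius d h \<le> e"
proof -
  show bdd: "bdd_above (range (\<lambda>t::real. d 0 (t *\<^sub>R h)))"
    using small by (intro bdd_aboveI[of _ e]) (auto intro: less_imp_le)
  have "d 0 (1 *\<^sub>R h) \<le> line_radius d h"
    unfolding line_radius_def by (rule cSUP_upper[OF _ bdd]) simp
  moreover have "0 < d 0 h"
    using is_metric_pos[OF metric] h by metis
  ultimately show "0 < line_radius d h" by simp
  show "line_radius d h \<le> e"
    unfolding line_radius_def using small by (intro cSUP_least) (auto intro: less_imp_le)
qed

lemma fast_decreasing_sequence:
  fixes S :: "'b \<Rightarrow> real"
  assumes small: "\<And>e. 0 < e \<Longrightarrow> \<exists>h. Q h \<and> 0 < S h \<and> S h \<le> e"
  shows "\<exists>g :: nat \<Rightarrow> 'b. (\<forall>n. Q (g n)) \<and> 0 < S (g 0) \<and> S (g 0) < 1 \<and>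
           (\<forall>n. S (g (Suc n)) < (1/4) * S (g n))"
proof -
  define P where "P = (\<lambda>(n::nat) h. Q h \<and> 0 < S h \<and> S h < 1)"
  have start: "\<exists>h. P 0 h"
    using small[of "1/2"] unfolding P_def by force
  have step: "\<exists>h'. P (Suc n) h' \<and> S h' < (1/4) * S h" if "P n h" for n h
  proof -
    from that have "0 < S h / 8" "S h < 1" unfolding P_def by auto
    then obtain h' where "Q h'" "0 < S h'" "S h' \<le> S h / 8"
      using small by blast
    then show ?thesis unfolding P_def using \<open>S h < 1\<close> by (intro exI[of _ h']) auto
  qed
  obtain g where "\<forall>n. P n (g n) \<and> S (g (Suc n)) < (1/4) * S (g n)"
    using dependent_nat_choice[of P "\<lambda>_ h h'. S h' < (1/4) * S h", OF start step] by blast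
  then show ?thesis unfolding P_def by blast
qed

theorem lemma7p6:
  fixes d :: "'a::{real_vector, topological_ab_group_add, t2_space} \<Rightarrow> 'a \<Rightarrow> real"
  assumes scal_cont: "\<And>t::real. continuous_on UNIV (\<lambda>x::'a. t *\<^sub>R x)"
    and nontriv: "\<exists>x::'a. x \<noteq> 0"
    and lb: "locally_balanced TYPE('a)"
    and metric: "is_metric d"
    and d_cont: "continuous_on UNIV (\<lambda>p::'a \<times> 'a. d (fst p) (snd p))"
    and notNSS: "\<not> NSS TYPE('a)"
  shows "\<exists>g :: nat \<Rightarrow> 'a.
           (\<forall>n. bdd_above (range (\<lambda>t::real. d 0 (t *\<^sub>R g n)))) \<and>
           0 < (SUP t::real. d 0 (t *\<^sub>R g 0)) \<and> (SUP t::real. d 0 (t *\<^sub>R g 0)) < 1 \<and>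
           (\<forall>n. (SUP t::real. d 0 (t *\<^sub>R g (Suc n))) < (1/4) * (SUP t::real. d 0 (t *\<^sub>R g n)))"
proof -
  have "\<exists>h. bdd_above (range (\<lambda>t::real. d 0 (t *\<^sub>R h))) \<and>
            0 < line_radius d h \<and> line_radius d h \<le> e" if e: "0 < e" for e
  proof -
    obtain h where "h \<noteq> 0" and "\<forall>t::real. t *\<^sub>R h \<in> {x. d 0 x < e}"
      using small_line_exists[OF lb notNSS nhd0_metric_ball[OF metric d_cont e]] by blast
    then show ?thesis
      using line_radius_bounds[OF metric, of h e] by auto
  qed
  from fast_decreasing_sequence[OF this]
  show ?thesis unfolding line_radius_def by blast
qed

end
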